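(* Let $m,n,k$ be positive integers with $k<n$, $A\in\mathbb{R}^{m\times n}$, $x^*\in\mathbb{R}^n$ with support $S^*$ satisfying $1\le|S^*|\le k$, $e\in\mathbb{R}^m$, $y=Ax^*+e$. Let $\mathcal{X}^0\in\mathbb{R}^n$, $\eta>0$, let $(S^t,x^t,\mathcal{X}^t)_{t\ge0}$ be generated by SEA, $b^t=u^t-\eta A^T(Ax^t-y)$ and $B=\sup_{t\in\mathbb{N}}\|b^t\|_\infty$. Assume $$B<\frac{1}{2\sum_{i\in S^*}\frac{1}{\eta|x^*_i|}},$$ and set $$T'_{max}=\frac{\sum_{i\in S^*}\frac{\max_{j\notin S^*}|\mathcal{X}^0_j|+|\mathcal{X}^0_i|}{\eta|x^*_i|}+k+1}{1-2B\sum_{i\in S^*}\frac{1}{\eta|x^*_i|}},\qquad \tau_i=\frac{\max_{j\notin S^*}|\mathcal{X}^0_j|+|\mathcal{X}^0_i|+2T'_{max}B}{\eta|x^*_i|}\ (i\in S^* ).$$ Then for every $i\in S^*$ and every integer $t\le T'_{max}$, $c^t_i\le\tau_i+1$.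
   Context: $S^*=\{i:x^*_i\neq0\}$. For $v\in\mathbb{R}^n$, $\mathrm{largest}_k(v)$ is the set of indices of the $k$ entries of $v$ with largest absolute value (ties broken by selecting the highest indices). For $S\subseteq\{1,\dots,n\}$, $A_S$ is the submatrix of columns indexed by $S$, $v_S$ the restriction of a vector to $S$, $A_S^\dagger$ the Moore–Penrose pseudoinverse of $A_S$. SEA with initialization $\mathcal{X}^0$ and step size $\eta$ generates, for $t=0,1,2,\dots$: $S^t=\mathrm{largest}_k(\mathcal{X}^t)$; $x^t_i=0$ for $i\notin S^t$ and $x^t_{S^t}=A_{S^t}^\dagger y$; $\mathcal{X}^{t+1}=\mathcal{X}^t-\eta A^T(Ax^t-y)$. The oracle direction is $u^t_i=-\eta x^*_i$ if $i\in S^*\setminus S^t$ and $u^t_i=0$ otherwise. The counts are $c^0_i=0$ and, for $t\ge1$, $c^t_i=|\{t'\in\{0,\dots,t-1\}: i\in S^*\setminus S^{t'}\}|$. *)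

theory Defs
  imports Complex_Main
begin

text \<open>Vectors in R^n are functions nat => real, meaningful on indices 0..n-1
  (paper indices 1..n shifted by one; order preserved). Matrices in R^{m x n}
  are functions nat => nat => real, meaningful on rows < m, columns < n.
  Submatrices are indexed by arbitrary finite index sets.\<close>

definition mm :: "'i set \<Rightarrow> ('a \<Rightarrow> 'i \<Rightarrow> real) \<Rightarrow> ('i \<Rightarrow> 'b \<Rightarrow> real) \<Rightarrow> 'a \<Rightarrow> 'b \<Rightarrow> real" where
  "mm I M N = (\<lambda>a b. \<Sum>c\<in>I. M a c * N c b)"

definition is_pinv :: "'r set \<Rightarrow> 'c set \<Rightarrow> ('r \<Rightarrow> 'c \<Rightarrow> real) \<Rightarrow> ('c \<Rightarrow> 'r \<Rightarrow> real) \<Rightarrow> bool" where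
  "is_pinv R C M P \<longleftrightarrow>
     (\<forall>c a. (c \<notin> C \<or> a \<notin> R) \<longrightarrow> P c a = 0) \<and>
     (\<forall>a\<in>R. \<forall>b\<in>C. mm R (mm C M P) M a b = M a b) \<and>
     (\<forall>c\<in>C. \<forall>a\<in>R. mm C (mm R P M) P c a = P c a) \<and>
     (\<forall>a\<in>R. \<forall>a'\<in>R. mm C M P a a' = mm C M P a' a) \<and>
     (\<forall>c\<in>C. \<forall>c'\<in>C. mm R P M c c' = mm R P M c' c)"

definition pinv :: "'r set \<Rightarrow> 'c set \<Rightarrow> ('r \<Rightarrow> 'c \<Rightarrow> real) \<Rightarrow> ('c \<Rightarrow> 'r \<Rightarrow> real)" where
  "pinv R C M = (THE P. is_pinv R C M P)"

definition largest_k :: "nat \<Rightarrow> nat \<Rightarrow> (nat \<Rightarrow> real) \<Rightarrow> nat set" where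
  "largest_k n k v = (THE S. S \<subseteq> {..<n} \<and> card S = k \<and>
      (\<forall>i\<in>S. \<forall>j\<in>{..<n} - S. \<bar>v j\<bar> < \<bar>v i\<bar> \<or> (\<bar>v j\<bar> = \<bar>v i\<bar> \<and> j < i)))"

definition sea_x :: "nat \<Rightarrow> nat \<Rightarrow> nat \<Rightarrow> (nat \<Rightarrow> nat \<Rightarrow> real) \<Rightarrow> (nat \<Rightarrow> real) \<Rightarrow> (nat \<Rightarrow> real) \<Rightarrow> nat \<Rightarrow> real" where
  "sea_x m n k A y X =
     (let S = largest_k n k X; P = pinv {..<m} S (\<lambda>r j. A r j)
      in (\<lambda>i. if i \<in> S then (\<Sum>r<m. P i r * y r) else 0))"

definition grad :: "nat \<Rightarrow> nat \<Rightarrow> (nat \<Rightarrow> nat \<Rightarrow> real) \<Rightarrow> (nat \<Rightarrow> real) \<Rightarrow> (nat \<Rightarrow> real) \<Rightarrow> nat \<Rightarrow> real" where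
  "grad m n A y x = (\<lambda>i. \<Sum>r<m. A r i * ((\<Sum>j<n. A r j * x j) - y r))"

primrec sea_X :: "nat \<Rightarrow> nat \<Rightarrow> nat \<Rightarrow> (nat \<Rightarrow> nat \<Rightarrow> real) \<Rightarrow> (nat \<Rightarrow> real) \<Rightarrow> (nat \<Rightarrow> real) \<Rightarrow> real \<Rightarrow> nat \<Rightarrow> nat \<Rightarrow> real" where
  "sea_X m n k A y X0 eta 0 = X0"
| "sea_X m n k A y X0 eta (Suc t) =
     (\<lambda>i. sea_X m n k A y X0 eta t i - eta * grad m n A y (sea_x m n k A y (sea_X m n k A y X0 eta t)) i)"

definition sea_S :: "nat \<Rightarrow> nat \<Rightarrow> nat \<Rightarrow> (nat \<Rightarrow> nat \<Rightarrow> real) \<Rightarrow> (nat \<Rightarrow> real) \<Rightarrow> (nat \<Rightarrow> real) \<Rightarrow> real \<Rightarrow> nat \<Rightarrow> nat set" where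
  "sea_S m n k A y X0 eta t = largest_k n k (sea_X m n k A y X0 eta t)"

definition sea_xt :: "nat \<Rightarrow> nat \<Rightarrow> nat \<Rightarrow> (nat \<Rightarrow> nat \<Rightarrow> real) \<Rightarrow> (nat \<Rightarrow> real) \<Rightarrow> (nat \<Rightarrow> real) \<Rightarrow> real \<Rightarrow> nat \<Rightarrow> nat \<Rightarrow> real" where
  "sea_xt m n k A y X0 eta t = sea_x m n k A y (sea_X m n k A y X0 eta t)"

end

theory Submission
  imports Defs "HOL-Library.Product_Lexorder"
begin

text \<open>Since \<open>X\<^sup>t\<^sup>+\<^sup>1 = X\<^sup>t + b\<^sup>t - u\<^sup>t\<close> and \<open>-u\<^sup>t\<^sub>i = \<eta> x\<^sup>*\<^sub>i\<close> exactly when the support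
  index \<open>i\<close> is missed, \<open>X\<^sup>t\<^sub>i = X\<^sup>0\<^sub>i + \<Sum>\<^sub>s\<^sub><\<^sub>t b\<^sup>s\<^sub>i + \<eta> x\<^sup>*\<^sub>i c\<^sup>t\<^sub>i\<close>. Hence off \<open>S\<^sup>*\<close> the
  iterate stays below \<open>max\<^sub>j |X\<^sup>0\<^sub>j| + tB\<close>, while a support index has
  \<open>|X\<^sup>t\<^sub>i| \<ge> \<eta>|x\<^sup>*\<^sub>i| c\<^sup>t\<^sub>i - |X\<^sup>0\<^sub>i| - tB\<close>. When \<open>i\<close> is missed at time \<open>t\<close>, the \<open>k\<close>-set
  \<open>S\<^sup>t\<close> must contain some \<open>j \<notin> S\<^sup>*\<close> because \<open>|S\<^sup>*| \<le> k\<close>, and \<open>|X\<^sup>t\<^sub>i| \<le> |X\<^sup>t\<^sub>j|\<close> gives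
  \<open>c\<^sup>t\<^sub>i \<le> \<tau>\<^sub>i\<close>. As \<open>c\<^sub>i\<close> only grows at such times, and by one, \<open>c\<^sup>t\<^sub>i \<le> \<tau>\<^sub>i + 1\<close>.\<close>

definition is_largest_k :: "nat \<Rightarrow> nat \<Rightarrow> (nat \<Rightarrow> real) \<Rightarrow> nat set \<Rightarrow> bool" where
  "is_largest_k n k v S \<longleftrightarrow> S \<subseteq> {..<n} \<and> card S = k \<and>
      (\<forall>i\<in>S. \<forall>j\<in>{..<n} - S. \<bar>v j\<bar> < \<bar>v i\<bar> \<or> (\<bar>v j\<bar> = \<bar>v i\<bar> \<and> j < i))"

lemma is_largest_k_iff_key:
  "is_largest_k n k v S \<longleftrightarrow> S \<subseteq> {..<n} \<and> card S = k \<and>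
      (\<forall>i\<in>S. \<forall>j\<in>{..<n} - S. (\<bar>v j\<bar>, j) < (\<bar>v i\<bar>, i))"
  by (simp add: is_largest_k_def less_prod_def')

lemma is_largest_k_exists:
  assumes "k \<le> n" shows "\<exists>S. is_largest_k n k v S"
  using assms
proof (induction k)
  case 0
  show ?case by (rule exI[of _ "{}"]) (simp add: is_largest_k_def)
next
  case (Suc k)
  then obtain S where S: "is_largest_k n k v S" by auto
  define R where "R = {..<n} - S"
  define key where "key j = (\<bar>v j\<bar>, j)" for j
  have "finite S" using S finite_subset unfolding is_largest_k_def by blast
  then have "card R = n - k"
    using S unfolding is_largest_k_def R_def by (simp add: card_Diff_subset)
  then have "R \<noteq> {}" using Suc.prems by (intro notI) simp
  then have "Max (key ` R) \<in> key ` R" unfolding R_def by (intro Max_in) simp_all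
  then obtain i where i: "i \<in> R" "key i = Max (key ` R)" by auto
  have "key j < key i" if "j \<in> R" "j \<noteq> i" for j
  proof -
    have "key j \<le> key i" using that i unfolding R_def by simp
    moreover have "key j \<noteq> key i" using \<open>j \<noteq> i\<close> by (simp add: key_def)
    ultimately show ?thesis by simp
  qed
  then have "is_largest_k n (Suc k) v (insert i S)"
    using S i \<open>finite S\<close> unfolding is_largest_k_iff_key R_def
    by (auto simp del: less_prod_simp simp: key_def)
  then show ?case by blast
qed

lemma is_largest_k_unique:
  assumes "is_largest_k n k v S" "is_largest_k n k v S'" shows "S = S'"
proof (rule ccontr)
  assume "S \<noteq> S'"
  have "finite S" "finite S'" "card S = card S'"
    using assms finite_subset unfolding is_largest_k_def by auto
  then obtain i j where "i \<in> S - S'" "j \<in> S' - S"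
    using \<open>S \<noteq> S'\<close> card_subset_eq by (metis Diff_eq_empty_iff ex_in_conv)
  then have "(\<bar>v j\<bar>, j) < (\<bar>v i\<bar>, i)" "(\<bar>v i\<bar>, i) < (\<bar>v j\<bar>, j)"
    using assms unfolding is_largest_k_iff_key by blast+
  then show False using less_asym by blast
qed

lemma is_largest_k_largest_k:
  assumes "k \<le> n" shows "is_largest_k n k v (largest_k n k v)"
proof -
  have "\<exists>!S. is_largest_k n k v S"
    using is_largest_k_exists[OF assms] is_largest_k_unique by blast
  then show ?thesis
    unfolding largest_k_def is_largest_k_def[symmetric] by (rule theI')
qed

lemma largest_k_subset: "k \<le> n \<Longrightarrow> largest_k n k v \<subseteq> {..<n}"
  using is_largest_k_largest_k unfolding is_largest_k_def by blast

lemma card_largest_k: "k \<le> n \<Longrightarrow> card (largest_k n k v) = k"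
  using is_largest_k_largest_k unfolding is_largest_k_def by blast

lemma abs_le_if_largest_k:
  assumes "k \<le> n" "j \<in> largest_k n k v" "i < n" "i \<notin> largest_k n k v"
  shows "\<bar>v i\<bar> \<le> \<bar>v j\<bar>"
proof -
  have "\<bar>v i\<bar> < \<bar>v j\<bar> \<or> (\<bar>v i\<bar> = \<bar>v j\<bar> \<and> i < j)"
    using is_largest_k_largest_k[OF assms(1), of v] assms(2-4) unfolding is_largest_k_def by blast
  then show ?thesis by linarith
qed

lemma ex_in_diff_if_card_le:
  assumes "finite T" "card T \<le> card S" "x \<in> T - S"
  shows "\<exists>j. j \<in> S - T"
proof (rule ccontr)
  assume "\<nexists>j. j \<in> S - T"
  then have "S \<subseteq> T - {x}" using assms(3) by blast
  then have "card S \<le> card (T - {x})" using assms(1) by (intro card_mono) simp_all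
  also have "\<dots> < card T" using assms(1,3) by (intro card_Diff1_less) simp_all
  finally show False using assms(2) by simp
qed

lemma Max_image_le_SUP:
  fixes f :: "'a \<Rightarrow> 'b \<Rightarrow> 'c::conditionally_complete_linorder"
  assumes "bdd_above (range (\<lambda>t. Max (f t ` A)))" "finite A" "x \<in> A"
  shows "f t x \<le> (SUP t. Max (f t ` A))"
proof -
  have "f t x \<le> Max (f t ` A)" using assms(2,3) by simp
  also have "\<dots> \<le> (SUP t. Max (f t ` A))" by (rule cSUP_upper[OF _ assms(1)]) simp
  finally show ?thesis .
qed

text \<open>SEA in the abstract: \<open>b\<close> collects the perturbations, and \<open>a i\<close> (that is \<open>\<eta> x\<^sup>*\<^sub>i\<close>)
  is the drift a support index receives while it is missed.\<close>

locale thresholded_drift =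
  fixes n k :: nat and Sstar :: "nat set"
    and X b :: "nat \<Rightarrow> nat \<Rightarrow> real" and a :: "nat \<Rightarrow> real" and B :: real
  assumes k_less_n: "k < n"
    and Sstar_subset: "Sstar \<subseteq> {..<n}"
    and card_Sstar_le: "card Sstar \<le> k"
    and X_Suc: "\<And>t i. X (Suc t) i =
      X t i + b t i + (if i \<in> Sstar - largest_k n k (X t) then a i else 0)"
    and abs_b_le: "\<And>t i. i < n \<Longrightarrow> \<bar>b t i\<bar> \<le> B"
begin

abbreviation support :: "nat \<Rightarrow> nat set" where
  "support t \<equiv> largest_k n k (X t)"

definition misses :: "nat \<Rightarrow> nat \<Rightarrow> nat" where
  "misses t i = card {s \<in> {..<t}. i \<in> Sstar - support s}"

definition max_off_support :: real where
  "max_off_support = Max ((\<lambda>j. \<bar>X 0 j\<bar>) ` ({..<n} - Sstar))"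

lemma misses_0 [simp]: "misses 0 i = 0"
  by (simp add: misses_def)

lemma misses_Suc: "misses (Suc t) i = misses t i + (if i \<in> Sstar - support t then 1 else 0)"
proof -
  have "{s \<in> {..<Suc t}. i \<in> Sstar - support s} =
      (if i \<in> Sstar - support t then insert t else id) {s \<in> {..<t}. i \<in> Sstar - support s}"
    by (auto simp: less_Suc_eq)
  then show ?thesis by (simp add: misses_def)
qed

lemma misses_off_support: "i \<notin> Sstar \<Longrightarrow> misses t i = 0"
  by (simp add: misses_def)

lemma X_eq: "X t i = X 0 i + (\<Sum>s<t. b s i) + a i * misses t i"
  by (induction t) (simp_all add: X_Suc misses_Suc algebra_simps)

lemma abs_sum_b_le:
  assumes "i < n" shows "\<bar>\<Sum>s<t. b s i\<bar> \<le> t * B"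
proof -
  have "\<bar>\<Sum>s<t. b s i\<bar> \<le> (\<Sum>s<t. \<bar>b s i\<bar>)" by (rule sum_abs)
  also have "\<dots> \<le> (\<Sum>s<t. B)" by (rule sum_mono) (simp add: abs_b_le assms)
  finally show ?thesis by simp
qed

lemma B_nonneg: "0 \<le> B"
  using abs_b_le[of 0 0] k_less_n by simp

lemma off_support_nonempty: "{..<n} - Sstar \<noteq> {}"
  using card_mono[of Sstar "{..<n}"] card_Sstar_le k_less_n Sstar_subset by auto

lemma max_off_support_nonneg: "0 \<le> max_off_support"
proof -
  obtain j where "j \<in> {..<n} - Sstar" using off_support_nonempty by blast
  then have "\<bar>X 0 j\<bar> \<le> max_off_support" unfolding max_off_support_def by simp
  then show ?thesis by linarith
qed

lemma abs_X_off_support_le: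
  assumes "j < n" "j \<notin> Sstar"
  shows "\<bar>X t j\<bar> \<le> max_off_support + t * B"
proof -
  have "X t j = X 0 j + (\<Sum>s<t. b s j)" using X_eq[of t j] misses_off_support[OF assms(2)] by simp
  moreover have "\<bar>X 0 j\<bar> \<le> max_off_support" using assms unfolding max_off_support_def by simp
  ultimately show ?thesis using abs_sum_b_le[OF assms(1), of t] by linarith
qed

lemma abs_X_on_support_ge:
  assumes "i < n"
  shows "\<bar>a i\<bar> * misses t i - \<bar>X 0 i\<bar> - t * B \<le> \<bar>X t i\<bar>"
proof -
  have "\<bar>a i * misses t i\<bar> = \<bar>a i\<bar> * misses t i" by (simp add: abs_mult)
  then show ?thesis using X_eq[of t i] abs_sum_b_le[OF assms, of t] by linarith
qed

lemma misses_bound_when_missed: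
  assumes "i \<in> Sstar" "i \<notin> support t"
  shows "\<bar>a i\<bar> * misses t i \<le> max_off_support + \<bar>X 0 i\<bar> + 2 * t * B"
proof -
  have "k \<le> n" using k_less_n by simp
  have "finite Sstar" using Sstar_subset finite_subset by blast
  moreover have "card Sstar \<le> card (support t)"
    using card_Sstar_le card_largest_k[OF \<open>k \<le> n\<close>] by simp
  ultimately obtain j where j: "j \<in> support t" "j \<notin> Sstar"
    using ex_in_diff_if_card_le[of Sstar "support t" i] assms by blast
  have "j < n" using j(1) largest_k_subset[OF \<open>k \<le> n\<close>] by blast
  have "i < n" using assms(1) Sstar_subset by blast
  have "\<bar>X t i\<bar> \<le> \<bar>X t j\<bar>" using abs_le_if_largest_k[OF \<open>k \<le> n\<close> j(1) \<open>i < n\<close> assms(2)] .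
  then show ?thesis
    using abs_X_on_support_ge[OF \<open>i < n\<close>, of t] abs_X_off_support_le[OF \<open>j < n\<close> j(2), of t]
    by linarith
qed

lemma misses_le:
  assumes "i \<in> Sstar" "a i \<noteq> 0" "real t \<le> T"
  shows "real (misses t i) \<le> (max_off_support + \<bar>X 0 i\<bar> + 2 * T * B) / \<bar>a i\<bar> + 1"
  using assms(3)
proof (induction t)
  case 0
  then show ?case using max_off_support_nonneg B_nonneg assms(2) by simp
next
  case (Suc t)
  show ?case
  proof (cases "i \<in> support t")
    case True
    then show ?thesis using Suc by (simp add: misses_Suc)
  next
    case False
    have "2 * t * B \<le> 2 * T * B" using Suc.prems B_nonneg by (simp add: mult_right_mono)
    then have "\<bar>a i\<bar> * misses t i \<le> max_off_support + \<bar>X 0 i\<bar> + 2 * T * B"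
      using misses_bound_when_missed[OF assms(1) False] by linarith
    then have "real (misses t i) \<le> (max_off_support + \<bar>X 0 i\<bar> + 2 * T * B) / \<bar>a i\<bar>"
      using assms(2) by (simp add: pos_le_divide_eq mult.commute)
    moreover have "misses (Suc t) i = misses t i + 1" using assms(1) False by (simp add: misses_Suc)
    ultimately show ?thesis by simp
  qed
qed

end

theorem propositionC5:
  fixes m n k :: nat and A :: "nat \<Rightarrow> nat \<Rightarrow> real"
    and xs e y X0 :: "nat \<Rightarrow> real" and eta :: real
    and Sstar :: "nat set" and u b :: "nat \<Rightarrow> nat \<Rightarrow> real" and c :: "nat \<Rightarrow> nat \<Rightarrow> nat"
    and B Tmax :: real and tau :: "nat \<Rightarrow> real"
  assumes "0 < m" "0 < n" "0 < k" "k < n"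
    and Sstar_def: "Sstar = {i. i < n \<and> xs i \<noteq> 0}"
    and "1 \<le> card Sstar" "card Sstar \<le> k"
    and y_def: "\<forall>r<m. y r = (\<Sum>j<n. A r j * xs j) + e r"
    and "0 < eta"
    and u_def: "\<forall>t i. u t i = (if i \<in> Sstar - sea_S m n k A y X0 eta t then - eta * xs i else 0)"
    and b_def: "\<forall>t i. b t i = u t i - eta * grad m n A y (sea_xt m n k A y X0 eta t) i"
    and bdd: "bdd_above (range (\<lambda>t. Max ((\<lambda>i. \<bar>b t i\<bar>) ` {..<n})))"
    and B_def: "B = (SUP t. Max ((\<lambda>i. \<bar>b t i\<bar>) ` {..<n}))"
    and hB: "B < 1 / (2 * (\<Sum>i\<in>Sstar. 1 / (eta * \<bar>xs i\<bar>)))"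
    and Tmax_def: "Tmax =
       ((\<Sum>i\<in>Sstar. (Max ((\<lambda>j. \<bar>X0 j\<bar>) ` ({..<n} - Sstar)) + \<bar>X0 i\<bar>) / (eta * \<bar>xs i\<bar>))
          + real k + 1)
       / (1 - 2 * B * (\<Sum>i\<in>Sstar. 1 / (eta * \<bar>xs i\<bar>)))"
    and tau_def: "\<forall>i\<in>Sstar. tau i =
       (Max ((\<lambda>j. \<bar>X0 j\<bar>) ` ({..<n} - Sstar)) + \<bar>X0 i\<bar> + 2 * Tmax * B) / (eta * \<bar>xs i\<bar>)"
    and c_def: "\<forall>t i. c t i = card {t' \<in> {..<t}. i \<in> Sstar - sea_S m n k A y X0 eta t'}"
  shows "\<forall>i\<in>Sstar. \<forall>t::nat. real t \<le> Tmax \<longrightarrow> real (c t i) \<le> tau i + 1"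
proof -
  let ?X = "sea_X m n k A y X0 eta"
  have X_Suc: "?X (Suc t) i =
      ?X t i + b t i + (if i \<in> Sstar - largest_k n k (?X t) then eta * xs i else 0)" for t i
    using b_def u_def by (simp add: sea_S_def sea_xt_def)
  have abs_b_le: "\<bar>b t i\<bar> \<le> B" if "i < n" for t i
    unfolding B_def using Max_image_le_SUP[OF bdd, of i t] that by simp
  interpret thresholded_drift n k Sstar ?X b "\<lambda>i. eta * xs i" B
    using assms(4,7) Sstar_def X_Suc abs_b_le by unfold_locales auto
  text \<open>Only \<open>real t \<le> Tmax\<close> is used: neither the value of \<open>Tmax\<close> nor \<open>hB\<close> matters.\<close>
  show ?thesis
  proof (intro ballI allI impI)
    fix i t assume i: "i \<in> Sstar" and t: "real t \<le> Tmax"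
    have "eta * xs i \<noteq> 0" using i Sstar_def \<open>0 < eta\<close> by simp
    then have "real (misses t i) \<le> (max_off_support + \<bar>X0 i\<bar> + 2 * Tmax * B) / \<bar>eta * xs i\<bar> + 1"
      using misses_le[OF i _ t] by simp
    moreover have "c t i = misses t i" using c_def by (simp add: misses_def sea_S_def)
    ultimately show "real (c t i) \<le> tau i + 1"
      using tau_def i \<open>0 < eta\<close> by (simp add: max_off_support_def abs_mult)
  qed
qed

end
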